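(* Let $p\in\mathbb R^3$, $\eta>0$, $T>\eta$, and let $v$ be as in the context. Then there is a function $\mathcal H(\tau;T,\eta)$, independent of $x$, such that for all $\tau>0$ and all $x\in B_{T-\eta}(p)\setminus\{p\}$, $$\frac{\tau^2}{4\pi}\int_{B_{T+\eta}(p)\setminus B_{T-\eta}(p)}\frac{e^{-\tau|x-y|}}{|x-y|}\big(\tau v(y,T)-\partial_tv(y,T)\big)\,dy=e^{-\tau(T-\eta)}\mathcal H(\tau;T,\eta)\frac{\sinh\tau|x-p|}{|x-p|},$$ and $\mathcal H(\tau;T,\eta)=\tau^{-1}\big(\eta+O(\tau^{-1})\big)$ as $\tau\to\infty$.
   Context: $B$ is the open ball of center $p\in\mathbb R^3$ and radius $\eta>0$, and $\Psi_B(x)=(\eta-|x-p|)\chi_B(x)$. For $t>0$, $$v(x,t)=\frac1{4\pi t}\int_{|y-x|=t}\Psi_B(y)\,dS_y,$$ which is the solution of $(\partial_t^2-\Delta)v=0$ in $\mathbb R^3\times(0,\infty)$ with $v(\cdot,0)=0$ and $\partial_tv(\cdot,0)=\Psi_B$. For $r>0$, $B_r(p)=\{x:|x-p|<r\}$. *)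

theory Defs
  imports "HOL-Analysis.Analysis" "HOL-Library.Landau_Symbols"
begin

definition sph_dir :: "real \<Rightarrow> real \<Rightarrow> real^3" where
  "sph_dir \<theta> \<phi> = vector [sin \<theta> * cos \<phi>, sin \<theta> * sin \<phi>, cos \<theta>]"

text \<open>Surface integral of f over the sphere of centre x and radius t (t > 0),
  written out in spherical coordinates (surface element t^2 sin theta).\<close>
definition sphere_integral :: "(real^3 \<Rightarrow> real) \<Rightarrow> real^3 \<Rightarrow> real \<Rightarrow> real" where
  "sphere_integral f x t =
     integral {0..pi} (\<lambda>\<theta>. integral {0..2*pi}
        (\<lambda>\<phi>. f (x + t *\<^sub>R sph_dir \<theta> \<phi>) * t\<^sup>2 * sin \<theta>))"

definition PsiB :: "real^3 \<Rightarrow> real \<Rightarrow> real^3 \<Rightarrow> real" where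
  "PsiB p \<eta> y = (if y \<in> ball p \<eta> then \<eta> - dist y p else 0)"

definition wave_v :: "real^3 \<Rightarrow> real \<Rightarrow> real^3 \<Rightarrow> real \<Rightarrow> real" where
  "wave_v p \<eta> x t = sphere_integral (PsiB p \<eta>) x t / (4 * pi * t)"

end

theory Submission
  imports Defs "HOL-Real_Asymp.Real_Asymp"
begin

text \<open>
  Everything reduces to radial integrals. Averaging the radial data over spheres gives the closed
  form \<open>v(y, t) = (\<Phi>(r + t) - \<Phi>(\<bar>r - t\<bar>)) / (2 r)\<close>, where \<open>r = \<bar>y - p\<bar>\<close> and
  \<open>\<Phi>(s) = \<integral>\<^sub>0\<^sup>s u \<Psi>(u) du\<close>. Averaging the Yukawa kernel \<open>exp(-\<tau> \<bar>x - y\<bar>) / \<bar>x - y\<bar>\<close>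
  over the sphere \<open>\<bar>y - p\<bar> = \<rho>\<close>, with \<open>\<rho> > \<bar>x - p\<bar>\<close>, gives
  \<open>4\<pi> exp(-\<tau> \<rho>) sinh(\<tau> \<bar>x - p\<bar>) / (\<tau> \<rho> \<bar>x - p\<bar>)\<close>, which splits off the whole dependence on
  \<open>x\<close>. Both averages are instances of Archimedes' formula, obtained from polar coordinates and
  rotation invariance. What remains is an integral over \<open>\<rho> \<in> [T - \<eta>, T + \<eta>]\<close> of
  \<open>exp(-\<tau> \<rho>)\<close> times a piecewise cubic in \<open>\<rho> - T\<close>; its closed form shows
  \<open>\<tau> H(\<tau>) = \<eta> + O(1/\<tau>)\<close>.
\<close>

section \<open>Iterated integrals over boxes in \<open>\<real>\<^sup>3\<close>\<close>

lemma vec3_eq_vector: "(w::real^3) = vector [w$1, w$2, w$3]"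
  by (simp add: vec_eq_iff forall_3 vector_3)

lemma vector3_eq_axis_sum:
  "(vector [x,y,z] :: real^3) = x *\<^sub>R axis 1 1 + y *\<^sub>R axis 2 1 + z *\<^sub>R axis 3 1"
  by (simp add: vec_eq_iff forall_3 vector_3 axis_def)

lemma image_vector3_cbox:
  "(\<lambda>(x,y,z). vector [x,y,z] :: real^3) ` cbox (a1,a2,a3) (b1,b2,b3) =
     cbox (vector [a1,a2,a3]) (vector [b1,b2,b3])"
proof -
  have "w \<in> (\<lambda>(x,y,z). vector [x,y,z] :: real^3) ` cbox (a1,a2,a3) (b1,b2,b3)"
    if "w \<in> cbox (vector [a1,a2,a3]) (vector [b1,b2,b3])" for w
  proof -
    have "w = (\<lambda>(x,y,z). vector [x,y,z] :: real^3) (w$1,w$2,w$3)"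
      by (simp add: vec3_eq_vector[symmetric])
    moreover have "(w$1,w$2,w$3) \<in> cbox (a1,a2,a3) (b1,b2,b3)"
      using that unfolding mem_box_cart cbox_Pair_iff by (simp add: forall_3 vector_3)
    ultimately show ?thesis by blast
  qed
  moreover have "(\<lambda>(x,y,z). vector [x,y,z] :: real^3) ` cbox (a1,a2,a3) (b1,b2,b3)
      \<subseteq> cbox (vector [a1,a2,a3]) (vector [b1,b2,b3])"
    by (clarsimp simp: cbox_Pair_iff) (simp add: mem_box_cart forall_3 vector_3)
  ultimately show ?thesis by blast
qed

lemma image_components3_cbox:
  "(\<lambda>w::real^3. (w$1,w$2,w$3)) ` cbox u v = cbox (u$1,u$2,u$3) (v$1,v$2,v$3)"
proof -
  have "q \<in> (\<lambda>w::real^3. (w$1,w$2,w$3)) ` cbox u v" if "q \<in> cbox (u$1,u$2,u$3) (v$1,v$2,v$3)" for q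
  proof -
    obtain x y z where q: "q = (x,y,z)" by (cases q) auto
    have "vector [x,y,z] \<in> cbox u v" using that q
      unfolding mem_box_cart cbox_Pair_iff by (simp add: forall_3 vector_3)
    moreover have "q = (\<lambda>w::real^3. (w$1,w$2,w$3)) (vector [x,y,z])" using q by (simp add: vector_3)
    ultimately show ?thesis by (rule image_eqI[rotated])
  qed
  moreover have "(\<lambda>w::real^3. (w$1,w$2,w$3)) ` cbox u v \<subseteq> cbox (u$1,u$2,u$3) (v$1,v$2,v$3)"
    by (clarsimp simp: cbox_Pair_iff) (simp add: mem_box_cart)
  ultimately show ?thesis by blast
qed

lemma content_cbox3:
  "Henstock_Kurzweil_Integration.content (cbox (u::real^3) v) =
     Henstock_Kurzweil_Integration.content {u$1..v$1} * Henstock_Kurzweil_Integration.content {u$2..v$2} *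
     Henstock_Kurzweil_Integration.content {u$3..v$3}"
proof (cases "cbox u v = {}")
  case True
  then obtain i where "v$i < u$i" unfolding interval_eq_empty_cart(2) by blast
  then have "v$1 < u$1 \<or> v$2 < u$2 \<or> v$3 < u$3" using exhaust_3[of i] by auto
  then have "Henstock_Kurzweil_Integration.content {u$1..v$1} * Henstock_Kurzweil_Integration.content {u$2..v$2} *
      Henstock_Kurzweil_Integration.content {u$3..v$3} = 0"
    by (elim disjE) (simp_all add: content_real_if)
  then show ?thesis using True by (simp only: content_empty)
next
  case False
  then have le: "\<forall>i. u$i \<le> v$i" unfolding interval_eq_empty_cart(2) not_ex not_less by blast
  have "Henstock_Kurzweil_Integration.content (cbox u v) = (\<Prod>i\<in>UNIV. v$i - u$i)"
    using False by (rule content_cbox_cart)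
  also have "\<dots> = (v$1 - u$1) * (v$2 - u$2) * (v$3 - u$3)"
    unfolding UNIV_3 by simp
  finally show ?thesis using le by (simp add: content_real_if)
qed

lemma integral_cbox3_iterated:
  fixes g :: "real^3 \<Rightarrow> real"
  assumes cg: "continuous_on (cbox u v) g"
  shows "integral (cbox u v) g = integral {u$1..v$1} (\<lambda>x. integral {u$2..v$2} (\<lambda>y.
           integral {u$3..v$3} (\<lambda>z. g (vector [x,y,z]))))"
proof -
  define V :: "real \<times> real \<times> real \<Rightarrow> real^3" where "V = (\<lambda>(x,y,z). vector [x,y,z])"
  define W :: "real^3 \<Rightarrow> real \<times> real \<times> real" where "W = (\<lambda>w. (w$1, w$2, w$3))"
  have VW: "\<And>x. W (V x) = x" by (auto simp: V_def W_def vector_3)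
  have WV: "\<And>x. V (W x) = x" by (simp add: V_def W_def vec3_eq_vector[symmetric])
  have contV: "continuous (at x) V" for x
    unfolding V_def case_prod_unfold vector3_eq_axis_sum by (intro continuous_intros)
  have imV: "\<exists>w z. V ` cbox a b = cbox w z" for a b
  proof -
    obtain a1 a2 a3 where "a = (a1,a2,a3)" by (cases a) auto
    moreover obtain b1 b2 b3 where "b = (b1,b2,b3)" by (cases b) auto
    ultimately show ?thesis unfolding V_def using image_vector3_cbox by blast
  qed
  have imW: "\<exists>w z. W ` cbox a b = cbox w z" for a b
    unfolding W_def using image_components3_cbox by blast
  have content_V: "Henstock_Kurzweil_Integration.content (V ` cbox a b) =
      1 * Henstock_Kurzweil_Integration.content (cbox a b)" for a b
  proof -
    obtain a1 a2 a3 where a: "a = (a1,a2,a3)" by (cases a) auto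
    obtain b1 b2 b3 where b: "b = (b1,b2,b3)" by (cases b) auto
    show ?thesis unfolding V_def a b image_vector3_cbox content_cbox3 content_Pair
      by (simp add: vector_3 cbox_interval)
  qed
  have "(g has_integral integral (cbox u v) g) (cbox u v)"
    using cg integrable_continuous by blast
  then have "((\<lambda>x. g (V x)) has_integral (1/1) *\<^sub>R integral (cbox u v) g) (W ` cbox u v)"
    by (intro has_integral_twiddle[OF _ VW WV contV imV imW content_V]) simp_all
  then have eq1: "integral (cbox (u$1,u$2,u$3) (v$1,v$2,v$3)) (\<lambda>x. g (V x)) = integral (cbox u v) g"
    unfolding W_def image_components3_cbox by (simp add: integral_unique)
  have cgV: "continuous_on (cbox (u$1,u$2,u$3) (v$1,v$2,v$3)) (\<lambda>x. g (V x))"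
  proof -
    have "V ` cbox (u$1,u$2,u$3) (v$1,v$2,v$3) = cbox u v"
      unfolding V_def image_vector3_cbox by (simp add: vec3_eq_vector[symmetric])
    then show ?thesis
      by (intro continuous_on_compose2[OF cg continuous_at_imp_continuous_on]) (simp_all add: contV)
  qed
  have eq2: "integral (cbox (u$1,u$2,u$3) (v$1,v$2,v$3)) (\<lambda>x. g (V x)) =
     integral (cbox (u$1) (v$1)) (\<lambda>x. integral (cbox (u$2,u$3) (v$2,v$3)) (\<lambda>y. g (V (x,y))))"
    by (rule integral_prod_continuous[OF cgV])
  have eq3: "integral (cbox (u$2,u$3) (v$2,v$3)) (\<lambda>y. g (V (x,y))) =
     integral (cbox (u$2) (v$2)) (\<lambda>y. integral (cbox (u$3) (v$3)) (\<lambda>z. g (V (x,y,z))))"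
    if "x \<in> cbox (u$1) (v$1)" for x
  proof (rule integral_prod_continuous)
    have "continuous_on (cbox (u$2,u$3) (v$2,v$3)) ((\<lambda>x. g (V x)) \<circ> (\<lambda>y. (x,y)))"
      by (intro continuous_on_compose continuous_intros continuous_on_subset[OF cgV])
        (use that in \<open>auto simp: cbox_Pair_iff\<close>)
    then show "continuous_on (cbox (u$2,u$3) (v$2,v$3)) (\<lambda>y. g (V (x,y)))" by (simp add: o_def)
  qed
  have "integral (cbox u v) g = integral (cbox (u$1) (v$1)) (\<lambda>x. integral (cbox (u$2) (v$2))
          (\<lambda>y. integral (cbox (u$3) (v$3)) (\<lambda>z. g (V (x,y,z)))))"
    unfolding eq1[symmetric] eq2 by (rule integral_cong) (rule eq3)
  then show ?thesis
    unfolding V_def cbox_interval by simp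
qed


section \<open>Spherical coordinates\<close>

lemma norm_vec3: "norm (x::real^3) = sqrt ((x$1)^2 + (x$2)^2 + (x$3)^2)"
  unfolding norm_eq_sqrt_inner inner_vec_def UNIV_3 by (simp add: power2_eq_square)

lemma norm_sph_dir [simp]: "norm (sph_dir \<theta> \<phi>) = 1"
proof -
  have "(sin \<theta> * cos \<phi>)^2 + (sin \<theta> * sin \<phi>)^2 + (cos \<theta>)^2 =
      (sin \<theta>)^2 * ((sin \<phi>)^2 + (cos \<phi>)^2) + (cos \<theta>)^2"
    by (simp only: power_mult_distrib algebra_simps)
  then show ?thesis
    unfolding norm_vec3 sph_dir_def by (simp add: vector_3)
qed

lemma has_derivative_vec_nth [derivative_intros]: "((\<lambda>v. v$i) has_derivative (\<lambda>h. h$i)) F"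
  by (rule bounded_linear_imp_has_derivative) (rule bounded_linear_vec_nth)

definition spherical :: "real^3 \<Rightarrow> real^3 \<Rightarrow> real^3" where
  "spherical c v = c + (v$1) *\<^sub>R sph_dir (v$2) (v$3)"

definition spherical_deriv :: "real^3 \<Rightarrow> real^3 \<Rightarrow> real^3" where
  "spherical_deriv v h = (h$1) *\<^sub>R sph_dir (v$2) (v$3)
     + (v$1 * h$2) *\<^sub>R vector [cos(v$2) * cos(v$3), cos(v$2) * sin(v$3), - sin(v$2)]
     + (v$1 * h$3) *\<^sub>R vector [- sin(v$2) * sin(v$3), sin(v$2) * cos(v$3), 0]"

lemma spherical_eq_axis_sum:
  "spherical c = (\<lambda>v. c + (v$1 * (sin (v$2) * cos (v$3))) *\<^sub>R axis 1 1
      + (v$1 * (sin (v$2) * sin (v$3))) *\<^sub>R axis 2 1 + (v$1 * cos (v$2)) *\<^sub>R axis 3 1)"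
  by (rule ext) (simp add: spherical_def sph_dir_def vec_eq_iff forall_3 vector_3 axis_def)

lemma has_derivative_spherical: "(spherical c has_derivative spherical_deriv v) (at v within S)"
  unfolding spherical_eq_axis_sum
  by (rule has_derivative_eq_rhs, (rule derivative_intros)+)
    (simp add: fun_eq_iff spherical_deriv_def sph_dir_def vec_eq_iff forall_3 vector_3 axis_def
      algebra_simps)

lemma continuous_on_spherical: "continuous_on S (spherical c)"
  by (rule has_derivative_continuous_on) (rule has_derivative_spherical)

lemma det_spherical_deriv: "det (matrix (spherical_deriv v)) = (v$1)^2 * sin (v$2)"
proof -
  have "det (matrix (spherical_deriv v)) =
      (v$1)^2 * sin (v$2) * (((cos (v$2))^2 + (sin (v$2))^2) * ((cos (v$3))^2 + (sin (v$3))^2))"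
    unfolding det_3
    by (simp add: matrix_def spherical_deriv_def sph_dir_def vector_3 axis_def algebra_simps
        power2_eq_square del: sin_cos_squared_add sin_cos_squared_add2 sin_cos_squared_add3)
  then show ?thesis by simp
qed

lemma abs_det_spherical_deriv:
  "0 \<le> v$2 \<Longrightarrow> v$2 \<le> pi \<Longrightarrow> \<bar>det (matrix (spherical_deriv v))\<bar> = (v$1)^2 * sin (v$2)"
  by (simp add: det_spherical_deriv sin_ge_zero)

lemma dist_spherical: "0 \<le> v$1 \<Longrightarrow> dist c (spherical c v) = v$1"
  by (simp add: spherical_def dist_norm)

lemma mem_box_spherical:
  "(v::real^3) \<in> box (vector [a,0,0]) (vector [b, pi, 2*pi]) \<longleftrightarrow>
     a < v$1 \<and> v$1 < b \<and> 0 < v$2 \<and> v$2 < pi \<and> 0 < v$3 \<and> v$3 < 2*pi"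
  "v \<in> cbox (vector [a,0,0]) (vector [b, pi, 2*pi]) \<longleftrightarrow>
     a \<le> v$1 \<and> v$1 \<le> b \<and> 0 \<le> v$2 \<and> v$2 \<le> pi \<and> 0 \<le> v$3 \<and> v$3 \<le> 2*pi"
  unfolding mem_box_cart forall_3 by (simp_all add: vector_3 conj_ac)

lemma inj_on_spherical:
  assumes "0 \<le> a"
  shows "inj_on (spherical c) (box (vector [a,0,0]) (vector [b, pi, 2*pi]))"
proof (rule inj_onI)
  fix v w assume "v \<in> box (vector [a,0,0]) (vector [b, pi, 2*pi])"
    and "w \<in> box (vector [a,0,0]) (vector [b, pi, 2*pi])" and eq: "spherical c v = spherical c w"
  then have vb: "a < v$1" "0 < v$2" "v$2 < pi" "0 < v$3" "v$3 < 2*pi"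
    and wb: "a < w$1" "0 < w$2" "w$2 < pi" "0 < w$3" "w$3 < 2*pi"
    unfolding mem_box_spherical by simp_all
  have e: "(v$1) *\<^sub>R sph_dir (v$2) (v$3) = (w$1) *\<^sub>R sph_dir (w$2) (w$3)"
    using eq unfolding spherical_def by simp
  then have "norm ((v$1) *\<^sub>R sph_dir (v$2) (v$3)) = norm ((w$1) *\<^sub>R sph_dir (w$2) (w$3))"
    by (rule arg_cong)
  then have r: "v$1 = w$1" using vb wb assms by simp
  then have "sph_dir (v$2) (v$3) = sph_dir (w$2) (w$3)" using e vb assms by simp
  then have "\<forall>i. sph_dir (v$2) (v$3) $ i = sph_dir (w$2) (w$3) $ i" by simp
  then have s1: "sin (v$2) * cos (v$3) = sin (w$2) * cos (w$3)"
    and s2: "sin (v$2) * sin (v$3) = sin (w$2) * sin (w$3)"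
    and s3: "cos (v$2) = cos (w$2)"
    unfolding sph_dir_def vector_3 by (simp_all only: forall_3 vector_3)
  have t: "v$2 = w$2" by (rule cos_inj_pi[OF _ _ _ _ s3]) (use vb wb in auto)
  have "sin (v$2) > 0" using vb by (intro sin_gt_zero) auto
  then have "sin (v$3) = sin (w$3) \<and> cos (v$3) = cos (w$3)"
    using s1 s2 unfolding t by simp
  then obtain n :: int where n: "v$3 = w$3 + 2 * pi * n" unfolding sin_cos_eq_iff by blast
  have "pi * real_of_int n < pi * 1" "pi * (-1) < pi * real_of_int n" using n vb wb by linarith+
  then have "real_of_int n < 1" "-1 < real_of_int n"
    using mult_less_cancel_left_pos[OF pi_gt_zero] by blast+
  then have "n = 0" by linarith
  then show "v = w" using r t n by (simp add: vec_eq_iff forall_3)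
qed

lemma lmeasurable_spherical_image:
  assumes "0 \<le> a"
  shows "spherical c ` box (vector [a,0,0]) (vector [b, pi, 2*pi]) \<in> lmeasurable"
proof -
  define D :: "(real^3) set" where "D = box (vector [a,0,0]) (vector [b, pi, 2*pi])"
  have "(\<lambda>v. (v$1)^2 * sin (v$2)) integrable_on D"
    unfolding D_def integrable_on_open_interval by (intro integrable_continuous continuous_intros)
  then have "(\<lambda>v. \<bar>det (matrix (spherical_deriv v))\<bar>) integrable_on D"
    by (rule integrable_eq) (simp add: D_def mem_box_spherical abs_det_spherical_deriv)
  then show ?thesis
    using measurable_differentiable_image_eq[of D "spherical c" spherical_deriv] assms
    unfolding D_def by (simp add: has_derivative_spherical inj_on_spherical)
qed


section \<open>Integration in polar coordinates\<close>

definition unit_sphere_integral :: "(real^3 \<Rightarrow> real) \<Rightarrow> real" where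
  "unit_sphere_integral g =
     integral {0..pi} (\<lambda>\<theta>. integral {0..2*pi} (\<lambda>\<phi>. g (sph_dir \<theta> \<phi>) * sin \<theta>))"

lemma unit_sphere_integral_cong:
  assumes "\<And>\<omega>. norm \<omega> = 1 \<Longrightarrow> g \<omega> = h \<omega>"
  shows "unit_sphere_integral g = unit_sphere_integral h"
  unfolding unit_sphere_integral_def using assms by simp

lemma unit_sphere_integral_mult_right:
  "unit_sphere_integral (\<lambda>\<omega>. g \<omega> * c) = unit_sphere_integral g * c"
proof -
  have "unit_sphere_integral (\<lambda>\<omega>. g \<omega> * c) =
      integral {0..pi} (\<lambda>\<theta>. integral {0..2*pi} (\<lambda>\<phi>. g (sph_dir \<theta> \<phi>) * sin \<theta> * c))"
    unfolding unit_sphere_integral_def by (intro integral_cong) (simp add: algebra_simps)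
  then show ?thesis unfolding unit_sphere_integral_def by simp
qed

lemma unit_sphere_integral_zonal:
  assumes "\<And>\<theta> \<phi>. g (sph_dir \<theta> \<phi>) = h \<theta>"
  shows "unit_sphere_integral g = 2 * pi * integral {0..pi} (\<lambda>\<theta>. h \<theta> * sin \<theta>)"
proof -
  have "unit_sphere_integral g = integral {0..pi} (\<lambda>\<theta>. 2 * pi * (h \<theta> * sin \<theta>))"
    unfolding unit_sphere_integral_def assms by (rule integral_cong) simp
  then show ?thesis by simp
qed

lemma unit_sphere_integral_const: "unit_sphere_integral (\<lambda>\<omega>. 1) = 4 * pi"
proof -
  have "((\<lambda>\<theta>. 1 * sin \<theta>) has_integral (- cos pi) - (- cos 0)) {0..pi}"
    by (rule fundamental_theorem_of_calculus)
      (auto intro!: derivative_eq_intros simp: has_real_derivative_iff_has_vector_derivative[symmetric])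
  then show ?thesis
    by (simp add: unit_sphere_integral_zonal[of _ "\<lambda>_. 1"] integral_unique)
qed

lemma integral_power2_mult:
  assumes "(a::real) \<le> b"
  shows "integral {a..b} (\<lambda>x. x^2 * k) = (b^3 - a^3) / 3 * k"
proof -
  have "((\<lambda>x. x^2 * k) has_integral (b^3/3*k - a^3/3*k)) {a..b}"
    using assms by (intro fundamental_theorem_of_calculus)
      (auto intro!: derivative_eq_intros simp: has_real_derivative_iff_has_vector_derivative[symmetric]
        power2_eq_square power3_eq_cube)
  from integral_unique[OF this] show ?thesis by (simp add: field_simps)
qed

lemma absolutely_integrable_on_subset_compact:
  fixes f :: "'a::euclidean_space \<Rightarrow> real"
  assumes "compact K" "continuous_on K f" "S \<subseteq> K" "S \<in> lmeasurable"
  shows "f absolutely_integrable_on S"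
proof -
  obtain M where M: "\<And>x. x \<in> K \<Longrightarrow> norm (f x) \<le> M"
    using compact_imp_bounded[OF compact_continuous_image[OF assms(2,1)]]
    unfolding bounded_iff by blast
  show ?thesis
  proof (rule measurable_bounded_by_integrable_imp_absolutely_integrable)
    show "f \<in> borel_measurable (lebesgue_on S)"
      using assms by (intro continuous_imp_measurable_on_sets_lebesgue continuous_on_subset[OF assms(2)])
        (auto intro: fmeasurableD)
    show "S \<in> sets lebesgue" using assms(4) by (rule fmeasurableD)
    show "(\<lambda>x. M) integrable_on S" using assms(4) by (rule integrable_on_const)
    show "norm (f x) \<le> M" if "x \<in> S" for x using M that assms(3) by blast
  qed
qed

lemma integral_spherical_image:
  fixes f :: "real^3 \<Rightarrow> real"
  assumes ab: "0 < a" "a < b" and cf: "continuous_on (cball c b - ball c a) f"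
  shows "integral (spherical c ` box (vector [a,0,0]) (vector [b, pi, 2*pi])) f =
           integral {a..b} (\<lambda>\<rho>. \<rho>^2 * unit_sphere_integral (\<lambda>\<omega>. f (c + \<rho> *\<^sub>R \<omega>)))"
proof -
  define lo where "lo = (vector [a,0,0] :: real^3)"
  define hi where "hi = (vector [b,pi,2*pi] :: real^3)"
  define K where "K = cball c b - ball c a"
  define J where "J = (\<lambda>v::real^3. (v$1)^2 * sin (v$2))"
  have Jabs: "\<bar>det (matrix (spherical_deriv v))\<bar> = J v" if "v \<in> cbox lo hi" for v
    using that unfolding J_def lo_def hi_def mem_box_spherical by (simp add: abs_det_spherical_deriv)
  have image_K: "spherical c ` cbox lo hi \<subseteq> K"
    using ab unfolding K_def lo_def hi_def by (auto simp: mem_box_spherical dist_spherical)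
  have contG: "continuous_on (cbox lo hi) (\<lambda>v. J v * f (spherical c v))"
    unfolding J_def by (intro continuous_intros continuous_on_compose2[OF cf continuous_on_spherical])
      (use image_K in \<open>auto simp: K_def\<close>)
  have Dleb: "box lo hi \<in> sets lebesgue" by (rule fmeasurableD) simp
  have der: "(spherical c has_derivative spherical_deriv v) (at v within box lo hi)" for v
    by (rule has_derivative_spherical)
  have inj: "inj_on (spherical c) (box lo hi)" unfolding lo_def hi_def using ab by (intro inj_on_spherical) simp
  have image_meas: "spherical c ` box lo hi \<in> lmeasurable"
    unfolding lo_def hi_def using ab by (intro lmeasurable_spherical_image) simp
  have "compact K" unfolding K_def by (intro compact_diff) auto
  moreover have "spherical c ` box lo hi \<subseteq> K" using image_K box_subset_cbox by blast
  ultimately have "f absolutely_integrable_on (spherical c ` box lo hi)"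
    using absolutely_integrable_on_subset_compact[OF _ _ _ image_meas] cf unfolding K_def by blast
  then have "integral (box lo hi) (\<lambda>v. \<bar>det (matrix (spherical_deriv v))\<bar> *\<^sub>R vec (f (spherical c v)) :: real^1) =
      vec (integral (spherical c ` box lo hi) f)"
    using has_absolute_integral_change_of_variables[OF Dleb der inj,
        of "\<lambda>z. vec (f z) :: real^1" "vec (integral (spherical c ` box lo hi) f)"]
    by (simp add: absolutely_integrable_on_1_iff integral_on_1_eq[of _ "\<lambda>z. vec (f z)"])
  then have "integral (spherical c ` box lo hi) f =
      integral (box lo hi) (\<lambda>v. \<bar>det (matrix (spherical_deriv v))\<bar> * f (spherical c v))"
    by (simp add: integral_on_1_eq[of "box lo hi"] vec_eq_iff)
  also have "\<dots> = integral (cbox lo hi) (\<lambda>v. J v * f (spherical c v))"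
    unfolding integral_open_interval[symmetric]
    by (rule integral_cong) (simp add: Jabs subsetD[OF box_subset_cbox])
  also have "\<dots> = integral {a..b} (\<lambda>\<rho>. integral {0..pi} (\<lambda>\<theta>. integral {0..2*pi}
      (\<lambda>\<phi>. (f (c + \<rho> *\<^sub>R sph_dir \<theta> \<phi>) * sin \<theta>) * \<rho>^2)))"
    using integral_cbox3_iterated[OF contG]
    unfolding lo_def hi_def by (simp add: J_def spherical_def vector_3 mult_ac)
  also have "\<dots> = integral {a..b} (\<lambda>\<rho>. \<rho>^2 * unit_sphere_integral (\<lambda>\<omega>. f (c + \<rho> *\<^sub>R \<omega>)))"
    by (simp add: unit_sphere_integral_def mult.commute)
  finally show ?thesis unfolding lo_def hi_def .
qed

lemma
  fixes f :: "real^3 \<Rightarrow> real"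
  assumes ab: "0 < a" "a < b" and cf: "continuous_on (cball c b - ball c a) f"
  shows integral_shell_spherical: "integral (ball c b - ball c a) f =
            integral {a..b} (\<lambda>\<rho>. \<rho>^2 * unit_sphere_integral (\<lambda>\<omega>. f (c + \<rho> *\<^sub>R \<omega>)))"
    and absolutely_integrable_on_shell: "f absolutely_integrable_on (ball c b - ball c a)"
proof -
  define D :: "(real^3) set" where "D = box (vector [a,0,0]) (vector [b, pi, 2*pi])"
  define S where "S = ball c b - ball c a"
  have image_S: "spherical c ` D \<subseteq> S"
    using ab unfolding S_def D_def by (auto simp: mem_box_spherical dist_spherical)
  have S_meas: "S \<in> lmeasurable" unfolding S_def by (intro fmeasurable_Diff) (auto intro: fmeasurableD)
  have image_meas: "spherical c ` D \<in> lmeasurable"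
    unfolding D_def using ab by (intro lmeasurable_spherical_image) simp
  text \<open>The spherical image of the open box fills the shell up to a null set, because both have
    volume \<open>4\<pi>(b\<^sup>3 - a\<^sup>3)/3\<close>.\<close>
  have "measure lebesgue (spherical c ` D) = integral {a..b} (\<lambda>\<rho>. \<rho>^2 * (4 * pi))"
    using lmeasure_integral[OF image_meas] integral_spherical_image[OF ab continuous_on_const, of c 1]
    unfolding D_def by (simp add: unit_sphere_integral_const)
  also have "\<dots> = (b^3 - a^3) / 3 * (4 * pi)"
    using ab by (intro integral_power2_mult) simp
  also have "\<dots> = measure lebesgue S"
  proof -
    have "measure lebesgue S = measure lebesgue (ball c b) - measure lebesgue (ball c a)"
      unfolding S_def using ab by (intro measurable_measure_Diff) (auto intro: fmeasurableD)
    then show ?thesis using ab by (simp add: sphere_volume field_simps)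
  qed
  finally have "negligible (S - spherical c ` D)"
    using measurable_measure_Diff[OF S_meas fmeasurableD[OF image_meas] image_S] S_meas image_meas
    by (simp add: negligible_iff_measure0 fmeasurable_Diff fmeasurableD)
  then have "integral S f = integral (spherical c ` D) f"
    by (rule integral_subset_negligible[OF image_S, symmetric])
  then show "integral (ball c b - ball c a) f =
      integral {a..b} (\<lambda>\<rho>. \<rho>^2 * unit_sphere_integral (\<lambda>\<omega>. f (c + \<rho> *\<^sub>R \<omega>)))"
    unfolding S_def D_def using integral_spherical_image[OF ab cf] by simp
  have "compact (cball c b - ball c a)" by (intro compact_diff) auto
  moreover have "ball c b - ball c a \<subseteq> cball c b - ball c a" by auto
  ultimately show "f absolutely_integrable_on (ball c b - ball c a)"
    using absolutely_integrable_on_subset_compact cf S_meas unfolding S_def by blast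
qed


section \<open>Rotation invariance and Archimedes' formula\<close>

lemma integral_shell_radial_extension:
  assumes cg: "continuous_on (sphere 0 1) g"
  shows "integral (ball 0 2 - ball 0 1) (\<lambda>z::real^3. g (z /\<^sub>R norm z)) = 7/3 * unit_sphere_integral g"
    and "(\<lambda>z::real^3. g (z /\<^sub>R norm z)) absolutely_integrable_on (ball 0 2 - ball 0 1)"
proof -
  have cont: "continuous_on (cball 0 2 - ball 0 1) (\<lambda>z::real^3. g (z /\<^sub>R norm z))"
    by (rule continuous_on_compose2[OF cg]) (auto intro!: continuous_intros left_inverse)
  then show "(\<lambda>z::real^3. g (z /\<^sub>R norm z)) absolutely_integrable_on (ball 0 2 - ball 0 1)"
    by (rule absolutely_integrable_on_shell[rotated 2]) simp_all
  have "integral (ball 0 2 - ball 0 1) (\<lambda>z::real^3. g (z /\<^sub>R norm z)) =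
      integral {1..2} (\<lambda>\<rho>. \<rho>^2 * unit_sphere_integral g)"
    unfolding integral_shell_spherical[OF _ _ cont, simplified]
    by (rule integral_cong) (simp add: unit_sphere_integral_def)
  also have "\<dots> = (2^3 - 1^3) / 3 * unit_sphere_integral g"
    by (rule integral_power2_mult) simp
  finally show "integral (ball 0 2 - ball 0 1) (\<lambda>z::real^3. g (z /\<^sub>R norm z)) =
      7/3 * unit_sphere_integral g" by simp
qed

text \<open>Rotation invariance is inherited from the volume integral over the shell
  \<open>1 < \<bar>z\<bar> < 2\<close>, where it is the linear change of variables formula.\<close>

lemma unit_sphere_integral_orthogonal_transformation:
  fixes g :: "real^3 \<Rightarrow> real"
  assumes cg: "continuous_on (sphere 0 1) g" and Q: "orthogonal_transformation Q"
  shows "unit_sphere_integral (\<lambda>\<omega>. g (Q \<omega>)) = unit_sphere_integral g"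
proof -
  define S where "S = ball (0::real^3) 2 - ball 0 1"
  define f where "f = (\<lambda>z::real^3. g (z /\<^sub>R norm z))"
  have nQ: "norm (Q x) = norm x" for x using Q by (rule orthogonal_transformation_norm)
  have linQ: "linear Q" using Q by (rule orthogonal_transformation_linear)
  have cgQ: "continuous_on (sphere 0 1) (\<lambda>\<omega>. g (Q \<omega>))"
    by (rule continuous_on_compose2[OF cg])
      (auto simp: nQ intro: linear_continuous_on linear_conv_bounded_linear[THEN iffD1, OF linQ])
  have QS: "Q ` S = S"
  proof
    show "Q ` S \<subseteq> S" unfolding S_def by (auto simp: nQ)
    show "S \<subseteq> Q ` S"
    proof
      fix x assume x: "x \<in> S"
      obtain y where y: "x = Q y" using orthogonal_transformation_surj[OF Q] by (metis surjD)
      then have "y \<in> S" using x unfolding S_def by (simp add: nQ)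
      then show "x \<in> Q ` S" using y by blast
    qed
  qed
  have fQ: "f (Q z) = g (Q (z /\<^sub>R norm z))" for z
    unfolding f_def nQ using linear_scale[OF linQ, of "inverse (norm z)" z] by simp
  have "(\<lambda>z. vec (f z) :: real^1) absolutely_integrable_on (Q ` S)"
    unfolding QS unfolding S_def f_def absolutely_integrable_on_1_iff vec_component
    by (rule integral_shell_radial_extension(2)[OF cg])
  then have "integral (Q ` S) (\<lambda>z. vec (f z) :: real^1) =
      \<bar>det (matrix Q)\<bar> *\<^sub>R integral S ((\<lambda>z. vec (f z)) \<circ> Q)"
    by (intro integral_change_of_variables_linear[OF linQ]) blast
  then have "vec (integral S f) = (vec (integral S (\<lambda>z. f (Q z))) :: real^1)"
    unfolding QS using Q
    by (simp add: integral_on_1_eq[of _ "\<lambda>z. vec (f z)"] integral_on_1_eq[of _ "\<lambda>z. vec (f (Q z))"] o_def)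
  then have "integral S f = integral S (\<lambda>z. g (Q (z /\<^sub>R norm z)))"
    by (simp add: vec_eq_iff fQ)
  then show ?thesis
    using integral_shell_radial_extension(1)[OF cg] integral_shell_radial_extension(1)[OF cgQ]
    unfolding S_def f_def by simp
qed

lemma norm_axis_plus_sph_dir:
  "norm (r *\<^sub>R axis 3 1 + t *\<^sub>R sph_dir \<theta> \<phi> :: real^3) = sqrt (r^2 + t^2 + 2*r*t* cos \<theta>)"
proof -
  have "(t*(sin \<theta>* cos \<phi>))^2 + (t*(sin \<theta>* sin \<phi>))^2 =
      t^2 * (sin \<theta>)^2 * ((sin \<phi>)^2 + (cos \<phi>)^2)"
    by (simp only: power_mult_distrib algebra_simps)
  moreover have "(r + t* cos \<theta>)^2 = r^2 + 2*r*t* cos \<theta> + t^2*(cos \<theta>)^2"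
    by (simp only: power2_sum power_mult_distrib algebra_simps)
  moreover have "t^2 * (sin \<theta>)^2 + t^2*(cos \<theta>)^2 = t^2"
    by (metis distrib_left sin_cos_squared_add mult_1_right)
  ultimately have "(t*(sin \<theta>* cos \<phi>))^2 + (t*(sin \<theta>* sin \<phi>))^2 + (r + t* cos \<theta>)^2 =
      r^2 + t^2 + 2*r*t* cos \<theta>"
    by simp
  then show ?thesis
    unfolding norm_vec3 sph_dir_def by (simp add: vector_3 axis_def)
qed

text \<open>Substituting \<open>s = \<bar>r e\<^sub>3 + t \<omega>(\<theta>, \<phi>)\<bar>\<close> turns \<open>sin \<theta> d\<theta>\<close> into \<open>s ds / (r t)\<close>.\<close>

lemma has_integral_zonal_distance:
  fixes g G :: "real \<Rightarrow> real"
  assumes r: "0 < r" and t: "0 < t"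
    and cont: "continuous_on {\<bar>r - t\<bar>..r + t} G"
    and der: "\<And>s. s \<in> {\<bar>r - t\<bar><..<r + t} \<Longrightarrow> (G has_real_derivative s * g s) (at s)"
  shows "((\<lambda>\<theta>. g (sqrt (r^2 + t^2 + 2 * r * t * cos \<theta>)) * sin \<theta>) has_integral
           (G (r + t) - G \<bar>r - t\<bar>) / (r * t)) {0..pi}"
proof -
  define q where "q = (\<lambda>\<theta>. r^2 + t^2 + 2 * r * t * cos \<theta>)"
  define F where "F = (\<lambda>\<theta>. - G (sqrt (q \<theta>)) / (r * t))"
  have q_diff: "q \<theta> = (r - t)^2 + 2 * r * t * (1 + cos \<theta>)" "q \<theta> = (r + t)^2 - 2 * r * t * (1 - cos \<theta>)" for \<theta>
    unfolding q_def by (simp_all add: power2_diff power2_sum algebra_simps)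
  have sqrt_q: "sqrt (q \<theta>) \<in> {\<bar>r - t\<bar>..r + t}" for \<theta>
  proof -
    have "0 \<le> 1 + cos \<theta>" "0 \<le> 1 - cos \<theta>"
      using cos_ge_minus_one[of \<theta>] cos_le_one[of \<theta>] by linarith+
    then have "0 \<le> 2 * r * t * (1 + cos \<theta>)" "0 \<le> 2 * r * t * (1 - cos \<theta>)"
      using r t by simp_all
    then have "(r - t)^2 \<le> q \<theta>" "q \<theta> \<le> (r + t)^2"
      using q_diff[of \<theta>] by linarith+
    then have "sqrt ((r - t)^2) \<le> sqrt (q \<theta>)" "sqrt (q \<theta>) \<le> sqrt ((r + t)^2)"
      by (simp_all only: real_sqrt_le_mono)
    then show ?thesis using r t by simp
  qed
  have "continuous_on {0..pi} F"
    unfolding F_def q_def using r t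
    by (intro continuous_intros continuous_on_compose2[OF cont]) (use sqrt_q[unfolded q_def] in auto)
  moreover have "(F has_vector_derivative (g (sqrt (q \<theta>)) * sin \<theta>)) (at \<theta>)" if "\<theta> \<in> {0<..<pi}" for \<theta>
  proof -
    have "-1 < cos \<theta>" "cos \<theta> < 1"
      using cos_monotone_0_pi[of \<theta> pi] cos_monotone_0_pi[of 0 \<theta>] that by auto
    then have "0 < 2 * r * t * (1 + cos \<theta>)" "0 < 2 * r * t * (1 - cos \<theta>)"
      using r t by simp_all
    then have q: "(r - t)^2 < q \<theta>" "q \<theta> < (r + t)^2"
      using q_diff[of \<theta>] by linarith+
    then have "sqrt ((r - t)^2) < sqrt (q \<theta>)" "sqrt (q \<theta>) < sqrt ((r + t)^2)"
      by (simp_all only: real_sqrt_less_mono)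
    then have s: "sqrt (q \<theta>) \<in> {\<bar>r - t\<bar><..<r + t}" using r t by simp
    have qpos: "0 < q \<theta>" using q(1) by (rule le_less_trans[OF zero_le_power2])
    then have spos: "0 < sqrt (q \<theta>)" by simp
    have "((\<lambda>\<theta>. sqrt (q \<theta>)) has_real_derivative (inverse (sqrt (q \<theta>)) / 2 * (- 2 * r * t * sin \<theta>))) (at \<theta>)"
      unfolding q_def using qpos[unfolded q_def] by (auto intro!: derivative_eq_intros)
    from DERIV_chain2[OF der[OF s] this]
    have "(F has_real_derivative - (sqrt (q \<theta>) * g (sqrt (q \<theta>)) * (inverse (sqrt (q \<theta>)) / 2 * (- 2 * r * t * sin \<theta>))) / (r * t)) (at \<theta>)"
      unfolding F_def by (intro DERIV_cdivide DERIV_minus)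
    moreover have "- (sqrt (q \<theta>) * g (sqrt (q \<theta>)) * (inverse (sqrt (q \<theta>)) / 2 * (- 2 * r * t * sin \<theta>))) / (r * t)
        = g (sqrt (q \<theta>)) * sin \<theta>"
      using spos r t by (simp add: field_simps)
    ultimately show ?thesis by (simp add: has_real_derivative_iff_has_vector_derivative)
  qed
  ultimately have "((\<lambda>\<theta>. g (sqrt (q \<theta>)) * sin \<theta>) has_integral (F pi - F 0)) {0..pi}"
    by (intro fundamental_theorem_of_calculus_interior_strong[of "{}"]) auto
  moreover have "q 0 = (r + t)^2" "q pi = (r - t)^2"
    unfolding q_def by (simp_all add: power2_sum power2_diff)
  then have "F pi - F 0 = (G (r + t) - G \<bar>r - t\<bar>) / (r * t)"
    unfolding F_def using r t by (simp add: field_simps)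
  ultimately show ?thesis unfolding q_def by simp
qed

text \<open>Archimedes' hat-box theorem, after rotating \<open>a\<close> onto the polar axis.\<close>

lemma unit_sphere_integral_radial:
  fixes a :: "real^3" and g G :: "real \<Rightarrow> real"
  assumes a: "a \<noteq> 0" and t: "0 < t"
    and cont_g: "continuous_on {\<bar>norm a - t\<bar>..norm a + t} g"
    and cont_G: "continuous_on {\<bar>norm a - t\<bar>..norm a + t} G"
    and der: "\<And>s. s \<in> {\<bar>norm a - t\<bar><..<norm a + t} \<Longrightarrow> (G has_real_derivative s * g s) (at s)"
  shows "unit_sphere_integral (\<lambda>\<omega>. g (norm (a + t *\<^sub>R \<omega>))) =
           2 * pi * (G (norm a + t) - G \<bar>norm a - t\<bar>) / (norm a * t)"
proof -
  have "norm (a + t *\<^sub>R \<omega>) \<in> {\<bar>norm a - t\<bar>..norm a + t}" if "\<omega> \<in> sphere 0 1" for \<omega>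
    using that t norm_triangle_ineq[of a "t *\<^sub>R \<omega>"] norm_diff_ineq[of a "t *\<^sub>R \<omega>"]
      norm_diff_ineq[of "t *\<^sub>R \<omega>" a]
    by (auto simp: abs_le_iff add.commute)
  then have cont: "continuous_on (sphere 0 1) (\<lambda>\<omega>. g (norm (a + t *\<^sub>R \<omega>)))"
    by (intro continuous_on_compose2[OF cont_g] continuous_intros) blast
  obtain Q where Q: "orthogonal_transformation Q" "Q (norm a *\<^sub>R axis (3::3) (1::real)) = a"
    by (rule orthogonal_transformation_exists[of "norm a *\<^sub>R axis (3::3) (1::real)" a]) simp
  have "g (norm (a + t *\<^sub>R Q \<omega>)) = g (norm (norm a *\<^sub>R axis 3 1 + t *\<^sub>R \<omega>))" for \<omega>
  proof -
    have "a + t *\<^sub>R Q \<omega> = Q (norm a *\<^sub>R axis 3 1 + t *\<^sub>R \<omega>)"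
      using Q linear_add[OF orthogonal_transformation_linear[OF Q(1)]]
        linear_scale[OF orthogonal_transformation_linear[OF Q(1)]] by simp
    then show ?thesis by (simp add: orthogonal_transformation_norm[OF Q(1)])
  qed
  then have "unit_sphere_integral (\<lambda>\<omega>. g (norm (a + t *\<^sub>R Q \<omega>))) =
      2 * pi * integral {0..pi} (\<lambda>\<theta>. g (sqrt ((norm a)^2 + t^2 + 2 * norm a * t * cos \<theta>)) * sin \<theta>)"
    by (intro unit_sphere_integral_zonal) (simp add: norm_axis_plus_sph_dir)
  then have "unit_sphere_integral (\<lambda>\<omega>. g (norm (a + t *\<^sub>R \<omega>))) =
      2 * pi * integral {0..pi} (\<lambda>\<theta>. g (sqrt ((norm a)^2 + t^2 + 2 * norm a * t * cos \<theta>)) * sin \<theta>)"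
    unfolding unit_sphere_integral_orthogonal_transformation[OF cont Q(1)] .
  also have "\<dots> = 2 * pi * ((G (norm a + t) - G \<bar>norm a - t\<bar>) / (norm a * t))"
    using has_integral_zonal_distance[OF _ t cont_G der] a by (simp add: integral_unique)
  finally show ?thesis by simp
qed


section \<open>The solution \<open>v\<close> for the radial data \<open>\<Psi>\<^sub>B\<close>\<close>

definition Psi_radial :: "real \<Rightarrow> real \<Rightarrow> real" where
  "Psi_radial \<eta> s = max (\<eta> - s) 0"

definition Psi_moment :: "real \<Rightarrow> real \<Rightarrow> real" where
  "Psi_moment \<eta> s = integral {0..s} (\<lambda>u. u * Psi_radial \<eta> u)"

lemma PsiB_eq_Psi_radial: "PsiB p \<eta> y = Psi_radial \<eta> (norm (y - p))"
  by (simp add: PsiB_def Psi_radial_def dist_norm norm_minus_commute)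

lemma continuous_on_Psi_radial: "continuous_on S (Psi_radial \<eta>)"
  unfolding Psi_radial_def by (intro continuous_intros)

lemma continuous_on_Psi_moment: "continuous_on {0..M} (Psi_moment \<eta>)"
  unfolding Psi_moment_def
  by (intro indefinite_integral_continuous_1 integrable_continuous_real continuous_intros
      continuous_on_Psi_radial)

lemma has_real_derivative_Psi_moment:
  assumes "0 < s"
  shows "(Psi_moment \<eta> has_real_derivative s * Psi_radial \<eta> s) (at s)"
proof -
  have "(Psi_moment \<eta> has_real_derivative s * Psi_radial \<eta> s) (at s within {0..s+1})"
    unfolding Psi_moment_def using assms
    by (intro integral_has_real_derivative continuous_intros continuous_on_Psi_radial) simp
  moreover have "at s within {0..s+1} = at s"
    by (rule at_within_interior) (use assms in simp)
  ultimately show ?thesis by simp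
qed

lemma has_real_derivative_Psi_moment_abs:
  assumes "u \<noteq> 0"
  shows "((\<lambda>u. Psi_moment \<eta> \<bar>u\<bar>) has_real_derivative u * Psi_radial \<eta> \<bar>u\<bar>) (at u)"
proof (cases "0 < u")
  case True
  then have "(Psi_moment \<eta> has_real_derivative u * Psi_radial \<eta> \<bar>u\<bar>) (at u)"
    using has_real_derivative_Psi_moment[OF True] by simp
  then show ?thesis
    by (rule has_field_derivative_transform_within_open[where S = "{0<..}"]) (use True in auto)
next
  case False
  then have u: "0 < - u" using assms by simp
  have "((\<lambda>u. Psi_moment \<eta> (- u)) has_real_derivative (- u) * Psi_radial \<eta> (- u) * (- 1)) (at u)"
    by (rule DERIV_chain2[of "Psi_moment \<eta>" _ uminus, OF has_real_derivative_Psi_moment[OF u]])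
      (auto intro!: derivative_eq_intros)
  then have "((\<lambda>u. Psi_moment \<eta> (- u)) has_real_derivative u * Psi_radial \<eta> \<bar>u\<bar>) (at u)"
    using u by simp
  then show ?thesis
    by (rule has_field_derivative_transform_within_open[where S = "{..<0}"]) (use u in auto)
qed

lemma Psi_moment_small:
  assumes "0 \<le> s" "s \<le> \<eta>"
  shows "Psi_moment \<eta> s = \<eta> * s^2/2 - s^3/3"
proof -
  have "Psi_moment \<eta> s = integral {0..s} (\<lambda>u. \<eta> * u - u^2)"
    unfolding Psi_moment_def
    by (rule integral_cong) (use assms in \<open>auto simp: Psi_radial_def power2_eq_square algebra_simps\<close>)
  also have "\<dots> = (\<eta> * s^2/2 - s^3/3) - (\<eta> * 0^2/2 - 0^3/3)"
    using assms
    by (intro integral_unique fundamental_theorem_of_calculus)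
      (auto intro!: derivative_eq_intros simp: has_real_derivative_iff_has_vector_derivative[symmetric]
        power2_eq_square power3_eq_cube)
  finally show ?thesis by simp
qed

lemma Psi_moment_large:
  assumes "\<eta> \<le> s" "0 < \<eta>"
  shows "Psi_moment \<eta> s = \<eta>^3/6"
proof -
  have "(\<lambda>u. u * Psi_radial \<eta> u) integrable_on {0..s}"
    by (intro integrable_continuous_real continuous_intros continuous_on_Psi_radial)
  then have "Psi_moment \<eta> s = Psi_moment \<eta> \<eta> + integral {\<eta>..s} (\<lambda>u. u * Psi_radial \<eta> u)"
    unfolding Psi_moment_def using assms
    by (intro Henstock_Kurzweil_Integration.integral_combine[symmetric]) auto
  also have "integral {\<eta>..s} (\<lambda>u. u * Psi_radial \<eta> u) = integral {\<eta>..s} (\<lambda>u. 0)"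
    by (rule integral_cong) (auto simp: Psi_radial_def)
  finally show ?thesis using assms by (simp add: Psi_moment_small power2_eq_square power3_eq_cube)
qed

definition v_radial :: "real \<Rightarrow> real \<Rightarrow> real \<Rightarrow> real" where
  "v_radial \<eta> r t = (Psi_moment \<eta> (r + t) - Psi_moment \<eta> \<bar>r - t\<bar>) / (2 * r)"

definition v_radial_dt :: "real \<Rightarrow> real \<Rightarrow> real \<Rightarrow> real" where
  "v_radial_dt \<eta> r t = ((r + t) * Psi_radial \<eta> (r + t) + (r - t) * Psi_radial \<eta> \<bar>r - t\<bar>) / (2 * r)"

lemma wave_v_eq_v_radial:
  assumes t: "0 < t" and y: "y \<noteq> p"
  shows "wave_v p \<eta> y t = v_radial \<eta> (dist y p) t"
proof -
  have a: "y - p \<noteq> 0" and r: "norm (y - p) = dist y p" using y by (simp_all add: dist_norm)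
  have "sphere_integral (PsiB p \<eta>) y t = integral {0..pi} (\<lambda>\<theta>. integral {0..2*pi}
      (\<lambda>\<phi>. Psi_radial \<eta> (norm ((y - p) + t *\<^sub>R sph_dir \<theta> \<phi>)) * sin \<theta> * t^2))"
    unfolding sphere_integral_def PsiB_eq_Psi_radial by (intro integral_cong) (simp add: algebra_simps)
  also have "\<dots> = unit_sphere_integral (\<lambda>\<omega>. Psi_radial \<eta> (norm ((y - p) + t *\<^sub>R \<omega>))) * t^2"
    unfolding unit_sphere_integral_def by simp
  also have "unit_sphere_integral (\<lambda>\<omega>. Psi_radial \<eta> (norm ((y - p) + t *\<^sub>R \<omega>))) =
      2 * pi * (Psi_moment \<eta> (dist y p + t) - Psi_moment \<eta> \<bar>dist y p - t\<bar>) / (dist y p * t)"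
    unfolding r[symmetric]
  proof (rule unit_sphere_integral_radial[OF a t continuous_on_Psi_radial])
    show "continuous_on {\<bar>norm (y - p) - t\<bar>..norm (y - p) + t} (Psi_moment \<eta>)"
      by (rule continuous_on_subset[OF continuous_on_Psi_moment]) auto
  next
    fix s assume "s \<in> {\<bar>norm (y - p) - t\<bar><..<norm (y - p) + t}"
    then have "0 < s" by (meson abs_ge_zero greaterThanLessThan_iff le_less_trans)
    then show "(Psi_moment \<eta> has_real_derivative s * Psi_radial \<eta> s) (at s)"
      by (rule has_real_derivative_Psi_moment)
  qed
  finally have "sphere_integral (PsiB p \<eta>) y t =
      2 * pi * (Psi_moment \<eta> (dist y p + t) - Psi_moment \<eta> \<bar>dist y p - t\<bar>) / (dist y p * t) * t^2" .
  moreover have "2 * pi * (Psi_moment \<eta> (dist y p + t) - Psi_moment \<eta> \<bar>dist y p - t\<bar>) / (dist y p * t) * t^2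
      / (4 * pi * t) = v_radial \<eta> (dist y p) t"
    unfolding v_radial_def using t y by (simp add: field_simps power2_eq_square)
  ultimately show ?thesis unfolding wave_v_def by simp
qed

lemma has_real_derivative_v_radial:
  assumes "0 < r" "0 < t" "r \<noteq> t"
  shows "(v_radial \<eta> r has_real_derivative v_radial_dt \<eta> r t) (at t)"
proof -
  have "((\<lambda>t. Psi_moment \<eta> (r + t)) has_real_derivative (r + t) * Psi_radial \<eta> (r + t) * 1) (at t)"
    using assms by (intro DERIV_chain2[OF has_real_derivative_Psi_moment]) (auto intro!: derivative_eq_intros)
  moreover have "((\<lambda>t. Psi_moment \<eta> \<bar>r - t\<bar>) has_real_derivative (r - t) * Psi_radial \<eta> \<bar>r - t\<bar> * (-1)) (at t)"
    using assms by (intro DERIV_chain2[OF has_real_derivative_Psi_moment_abs])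
      (auto intro!: derivative_eq_intros)
  ultimately have "(v_radial \<eta> r has_real_derivative
      ((r + t) * Psi_radial \<eta> (r + t) * 1 - (r - t) * Psi_radial \<eta> \<bar>r - t\<bar> * (-1)) / (2 * r)) (at t)"
    unfolding v_radial_def[abs_def] by (intro DERIV_cdivide DERIV_diff)
  then show ?thesis unfolding v_radial_dt_def by simp
qed

lemma deriv_wave_v:
  assumes T: "0 < T" and y: "y \<noteq> p" and yT: "dist y p \<noteq> T"
  shows "deriv (\<lambda>t. wave_v p \<eta> y t) T = v_radial_dt \<eta> (dist y p) T"
proof (rule DERIV_imp_deriv)
  have "(v_radial \<eta> (dist y p) has_real_derivative v_radial_dt \<eta> (dist y p) T) (at T)"
    using assms by (intro has_real_derivative_v_radial) auto
  then show "((\<lambda>t. wave_v p \<eta> y t) has_real_derivative v_radial_dt \<eta> (dist y p) T) (at T)"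
    by (rule has_field_derivative_transform_within_open[where S = "{0<..}"])
      (use T y wave_v_eq_v_radial in auto)
qed


section \<open>The Yukawa kernel on a shell\<close>

lemma unit_sphere_integral_yukawa:
  fixes a :: "real^3"
  assumes \<tau>: "0 < \<tau>" and a: "a \<noteq> 0" and \<rho>: "norm a < \<rho>"
  shows "unit_sphere_integral (\<lambda>\<omega>. exp (- \<tau> * norm (a + \<rho> *\<^sub>R \<omega>)) / norm (a + \<rho> *\<^sub>R \<omega>)) =
           4 * pi * exp (- \<tau> * \<rho>) * sinh (\<tau> * norm a) / (\<tau> * \<rho> * norm a)"
proof -
  define d where "d = norm a"
  have d: "0 < d" "d < \<rho>" "\<bar>d - \<rho>\<bar> = \<rho> - d" using a \<rho> by (simp_all add: d_def)
  have "unit_sphere_integral (\<lambda>\<omega>. exp (- \<tau> * norm (a + \<rho> *\<^sub>R \<omega>)) / norm (a + \<rho> *\<^sub>R \<omega>)) =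
      2 * pi * ((- exp (- \<tau> * (d + \<rho>)) / \<tau>) - (- exp (- \<tau> * (\<rho> - d)) / \<tau>)) / (d * \<rho>)"
    unfolding d_def[symmetric]
  proof (rule unit_sphere_integral_radial[of a \<rho> "\<lambda>s. exp (- \<tau> * s) / s" "\<lambda>s. - exp (- \<tau> * s) / \<tau>",
        unfolded d_def[symmetric] d(3)])
    show "continuous_on {\<rho> - d..d + \<rho>} (\<lambda>s. exp (- \<tau> * s) / s)"
      using d by (intro continuous_intros) auto
    show "((\<lambda>s. - exp (- \<tau> * s) / \<tau>) has_real_derivative s * (exp (- \<tau> * s) / s)) (at s)"
      if "s \<in> {\<rho> - d<..<d + \<rho>}" for s
      using that d \<tau> by (auto intro!: derivative_eq_intros)
  qed (use a d \<tau> in \<open>auto intro!: continuous_intros\<close>)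
  also have "\<dots> = 4 * pi * exp (- \<tau> * \<rho>) * sinh (\<tau> * d) / (\<tau> * \<rho> * d)"
    using d \<tau> by (simp add: sinh_def field_simps algebra_simps flip: exp_add)
  finally show ?thesis unfolding d_def .
qed

lemma integral_shell_yukawa:
  fixes p x :: "real^3" and F :: "real \<Rightarrow> real"
  assumes \<tau>: "0 < \<tau>" and ab: "0 < a" "a < b" and x: "x \<noteq> p" "dist x p < a"
    and F: "continuous_on {a..b} F"
  shows "integral (ball p b - ball p a) (\<lambda>y. exp (- \<tau> * dist x y) / dist x y * F (dist y p)) =
           4 * pi * sinh (\<tau> * dist x p) / (\<tau> * dist x p) * integral {a..b} (\<lambda>\<rho>. \<rho> * F \<rho> * exp (- \<tau> * \<rho>))"
proof -
  define d where "d = dist x p"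
  have d: "0 < d" "d < a" using x unfolding d_def by simp_all
  have shell: "a \<le> dist y p \<and> dist y p \<le> b \<and> 0 < dist x y" if "y \<in> cball p b - ball p a" for y
    using that dist_triangle[of y p x] d unfolding d_def by (auto simp: dist_commute)
  have "continuous_on (cball p b - ball p a) (\<lambda>y. exp (- \<tau> * dist x y) / dist x y * F (dist y p))"
    using shell by (intro continuous_intros continuous_on_compose2[OF F]) auto
  then have "integral (ball p b - ball p a) (\<lambda>y. exp (- \<tau> * dist x y) / dist x y * F (dist y p)) =
      integral {a..b} (\<lambda>\<rho>. \<rho>^2 * unit_sphere_integral (\<lambda>\<omega>. exp (- \<tau> * dist x (p + \<rho> *\<^sub>R \<omega>)) /
        dist x (p + \<rho> *\<^sub>R \<omega>) * F (dist (p + \<rho> *\<^sub>R \<omega>) p)))"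
    by (rule integral_shell_spherical[OF ab])
  also have "\<dots> = integral {a..b} (\<lambda>\<rho>. 4 * pi * sinh (\<tau> * d) / (\<tau> * d) * (\<rho> * F \<rho> * exp (- \<tau> * \<rho>)))"
  proof (rule integral_cong)
    fix \<rho> assume "\<rho> \<in> {a..b}"
    then have \<rho>: "norm (p - x) < \<rho>" "0 < \<rho>" using d ab unfolding d_def
      by (auto simp: dist_norm norm_minus_commute)
    have "unit_sphere_integral (\<lambda>\<omega>. exp (- \<tau> * dist x (p + \<rho> *\<^sub>R \<omega>)) / dist x (p + \<rho> *\<^sub>R \<omega>) *
        F (dist (p + \<rho> *\<^sub>R \<omega>) p)) =
      unit_sphere_integral (\<lambda>\<omega>. exp (- \<tau> * norm ((p - x) + \<rho> *\<^sub>R \<omega>)) / norm ((p - x) + \<rho> *\<^sub>R \<omega>)) * F \<rho>"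
      unfolding unit_sphere_integral_mult_right[symmetric]
      by (rule unit_sphere_integral_cong) (use \<rho> in \<open>simp add: dist_norm norm_minus_commute algebra_simps\<close>)
    also have "\<dots> = 4 * pi * exp (- \<tau> * \<rho>) * sinh (\<tau> * d) / (\<tau> * \<rho> * d) * F \<rho>"
      using x by (subst unit_sphere_integral_yukawa[OF \<tau> _ \<rho>(1)]) (simp_all add: d_def dist_norm norm_minus_commute)
    finally show "\<rho>^2 * unit_sphere_integral (\<lambda>\<omega>. exp (- \<tau> * dist x (p + \<rho> *\<^sub>R \<omega>)) /
        dist x (p + \<rho> *\<^sub>R \<omega>) * F (dist (p + \<rho> *\<^sub>R \<omega>) p)) =
        4 * pi * sinh (\<tau> * d) / (\<tau> * d) * (\<rho> * F \<rho> * exp (- \<tau> * \<rho>))"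
      using \<rho> d by (simp add: field_simps power2_eq_square)
  qed
  finally show ?thesis unfolding d_def by simp
qed


lemma continuous_on_v_radial_combination:
  assumes "0 < a" "0 < T"
  shows "continuous_on {a..b} (\<lambda>\<rho>. \<tau> * v_radial \<eta> \<rho> T - v_radial_dt \<eta> \<rho> T)"
proof -
  have "continuous_on {a..b} (\<lambda>\<rho>. Psi_moment \<eta> (\<rho> + T))" "continuous_on {a..b} (\<lambda>\<rho>. Psi_moment \<eta> \<bar>\<rho> - T\<bar>)"
    using assms by (intro continuous_on_compose2[OF continuous_on_Psi_moment[of "b + T"]] continuous_intros;
        force)+
  then show ?thesis
    unfolding v_radial_def v_radial_dt_def using assms
    by (intro continuous_intros continuous_on_compose2[OF continuous_on_Psi_radial[of UNIV]]) auto
qed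

lemma v_radial_combination_near_T:
  assumes \<eta>: "0 < \<eta>" "\<eta> < T" and \<rho>: "\<bar>\<rho> - T\<bar> \<le> \<eta>"
  shows "\<rho> * (\<tau> * v_radial \<eta> \<rho> T - v_radial_dt \<eta> \<rho> T) =
    \<tau> * \<eta>^3/12 - \<eta>/2 * (\<rho> - T) - \<tau> * \<eta>/4 * (\<rho> - T)^2 + (\<rho> - T) * \<bar>\<rho> - T\<bar> / 2
      + \<tau> * \<bar>\<rho> - T\<bar>^3 / 6"
proof -
  define u where "u = \<rho> - T"
  have "0 < \<rho>" using \<eta> \<rho> by linarith
  have m1: "Psi_moment \<eta> (\<rho> + T) = \<eta>^3/6" and r1: "Psi_radial \<eta> (\<rho> + T) = 0"
    using \<eta> \<rho> by (simp_all add: Psi_moment_large Psi_radial_def)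
  have m2: "Psi_moment \<eta> \<bar>u\<bar> = \<eta> * u^2/2 - \<bar>u\<bar>^3/3" and r2: "Psi_radial \<eta> \<bar>u\<bar> = \<eta> - \<bar>u\<bar>"
    using \<rho> unfolding u_def by (simp_all add: Psi_moment_small Psi_radial_def)
  have "\<rho> * (\<tau> * v_radial \<eta> \<rho> T - v_radial_dt \<eta> \<rho> T) =
      (\<tau> * (\<eta>^3/6 - (\<eta> * u^2/2 - \<bar>u\<bar>^3/3)) - u * (\<eta> - \<bar>u\<bar>)) / 2"
    unfolding v_radial_def v_radial_dt_def u_def[symmetric] m1 r1 m2 r2 using \<open>0 < \<rho>\<close>
    by (simp add: field_simps)
  then show ?thesis unfolding u_def[symmetric]
    by (simp add: field_simps power2_eq_square power3_eq_cube)
qed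

text \<open>\<open>-exp(-\<tau> \<rho>) P(\<rho> - h)\<close> is a primitive of \<open>exp(-\<tau> \<rho>) Q(\<rho> - h)\<close> for the cubic
  \<open>Q(u) = c\<^sub>0 + c\<^sub>1 u + c\<^sub>2 u\<^sup>2 + c\<^sub>3 u\<^sup>3\<close>, where \<open>P = Q/\<tau> + Q'/\<tau>\<^sup>2 + Q''/\<tau>\<^sup>3 + Q'''/\<tau>\<^sup>4\<close>.\<close>

definition cubic_exp_primitive :: "real \<Rightarrow> real \<Rightarrow> real \<Rightarrow> real \<Rightarrow> real \<Rightarrow> real \<Rightarrow> real" where
  "cubic_exp_primitive \<tau> c0 c1 c2 c3 u =
     (c0/\<tau> + c1/\<tau>^2 + 2*c2/\<tau>^3 + 6*c3/\<tau>^4) + (c1/\<tau> + 2*c2/\<tau>^2 + 6*c3/\<tau>^3) * u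
     + (c2/\<tau> + 3*c3/\<tau>^2) * u^2 + (c3/\<tau>) * u^3"

lemma has_integral_exp_cubic:
  assumes \<tau>: "\<tau> \<noteq> 0" and "a \<le> b"
  shows "((\<lambda>\<rho>. exp (- \<tau> * \<rho>) * (c0 + c1 * (\<rho> - h) + c2 * (\<rho> - h)^2 + c3 * (\<rho> - h)^3)) has_integral
     exp (- \<tau> * a) * cubic_exp_primitive \<tau> c0 c1 c2 c3 (a - h)
       - exp (- \<tau> * b) * cubic_exp_primitive \<tau> c0 c1 c2 c3 (b - h)) {a..b}"
proof -
  define P where "P = cubic_exp_primitive \<tau> c0 c1 c2 c3"
  define P' where "P' = (\<lambda>u. (c1/\<tau> + 2*c2/\<tau>^2 + 6*c3/\<tau>^3) + 2 * (c2/\<tau> + 3*c3/\<tau>^2) * u + 3 * (c3/\<tau>) * u^2)"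
  have deriv_P: "(P has_real_derivative P' u) (at u)" for u
    unfolding P_def P'_def cubic_exp_primitive_def using \<tau>
    by (auto intro!: derivative_eq_intros simp: power2_eq_square field_simps)
  have Q: "\<tau> * P u - P' u = c0 + c1 * u + c2 * u^2 + c3 * u^3" for u
    unfolding P_def P'_def cubic_exp_primitive_def using \<tau>
    by (simp add: field_simps power2_eq_square power3_eq_cube power4_eq_xxxx)
  have "((\<lambda>\<rho>. - exp (- \<tau> * \<rho>) * P (\<rho> - h)) has_real_derivative
      exp (- \<tau> * \<rho>) * (c0 + c1 * (\<rho> - h) + c2 * (\<rho> - h)^2 + c3 * (\<rho> - h)^3)) (at \<rho> within {a..b})" for \<rho>
  proof -
    have "((\<lambda>\<rho>. - exp (- \<tau> * \<rho>)) has_real_derivative \<tau> * exp (- \<tau> * \<rho>)) (at \<rho> within {a..b})"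
      by (auto intro!: derivative_eq_intros)
    moreover have "((\<lambda>\<rho>. P (\<rho> - h)) has_real_derivative P' (\<rho> - h) * 1) (at \<rho> within {a..b})"
      by (rule DERIV_chain2[of P _ "\<lambda>\<rho>. \<rho> - h"]) (auto intro!: derivative_eq_intros deriv_P)
    ultimately have "((\<lambda>\<rho>. - exp (- \<tau> * \<rho>) * P (\<rho> - h)) has_real_derivative
        - exp (- \<tau> * \<rho>) * (P' (\<rho> - h) * 1) + \<tau> * exp (- \<tau> * \<rho>) * P (\<rho> - h)) (at \<rho> within {a..b})"
      by (rule DERIV_mult')
    moreover have "- exp (- \<tau> * \<rho>) * (P' (\<rho> - h) * 1) + \<tau> * exp (- \<tau> * \<rho>) * P (\<rho> - h) =
        exp (- \<tau> * \<rho>) * (\<tau> * P (\<rho> - h) - P' (\<rho> - h))"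
      by (simp add: algebra_simps)
    ultimately show ?thesis unfolding Q by simp
  qed
  then show ?thesis
    using fundamental_theorem_of_calculus[OF \<open>a \<le> b\<close>, of "\<lambda>\<rho>. - exp (- \<tau> * \<rho>) * P (\<rho> - h)"]
    unfolding P_def by (simp add: has_real_derivative_iff_has_vector_derivative)
qed

lemma integral_v_radial_combination:
  assumes \<tau>: "0 < \<tau>" and \<eta>: "0 < \<eta>" "\<eta> < T"
  shows "exp (\<tau> * (T - \<eta>)) *
      integral {T-\<eta>..T+\<eta>} (\<lambda>\<rho>. \<rho> * (\<tau> * v_radial \<eta> \<rho> T - v_radial_dt \<eta> \<rho> T) * exp (- \<tau> * \<rho>))
    = 4 * exp (- \<tau> * \<eta>) / \<tau>^3 + \<eta> / \<tau>^2 - 2 / \<tau>^3 - exp (- \<tau> * (2 * \<eta>)) * (\<eta> / \<tau>^2 + 2 / \<tau>^3)"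
proof -
  define g where "g = (\<lambda>\<rho>. \<rho> * (\<tau> * v_radial \<eta> \<rho> T - v_radial_dt \<eta> \<rho> T) * exp (- \<tau> * \<rho>))"
  define P1 where "P1 = cubic_exp_primitive \<tau> (\<tau> * \<eta>^3/12) (-\<eta>/2) (-(\<tau> * \<eta>/4) - 1/2) (-\<tau>/6)"
  define P2 where "P2 = cubic_exp_primitive \<tau> (\<tau> * \<eta>^3/12) (-\<eta>/2) (1/2 - \<tau> * \<eta>/4) (\<tau>/6)"
  have g_left: "exp (- \<tau> * \<rho>) * (\<tau> * \<eta>^3/12 + (-\<eta>/2) * (\<rho> - T) + (-(\<tau> * \<eta>/4) - 1/2) * (\<rho> - T)^2
      + (-\<tau>/6) * (\<rho> - T)^3) = g \<rho>" if "T - \<eta> \<le> \<rho>" "\<rho> \<le> T" for \<rho>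
  proof -
    have le: "\<bar>\<rho> - T\<bar> \<le> \<eta>" and abs: "\<bar>\<rho> - T\<bar> = - (\<rho> - T)" using that by auto
    show ?thesis unfolding g_def v_radial_combination_near_T[OF \<eta> le] abs
      by (simp add: power2_eq_square power3_eq_cube field_simps)
  qed
  have g_right: "exp (- \<tau> * \<rho>) * (\<tau> * \<eta>^3/12 + (-\<eta>/2) * (\<rho> - T) + (1/2 - \<tau> * \<eta>/4) * (\<rho> - T)^2
      + (\<tau>/6) * (\<rho> - T)^3) = g \<rho>" if "T \<le> \<rho>" "\<rho> \<le> T + \<eta>" for \<rho>
  proof -
    have le: "\<bar>\<rho> - T\<bar> \<le> \<eta>" and abs: "\<bar>\<rho> - T\<bar> = \<rho> - T" using that by auto
    show ?thesis unfolding g_def v_radial_combination_near_T[OF \<eta> le] abs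
      by (simp add: power2_eq_square power3_eq_cube field_simps)
  qed
  have "((\<lambda>\<rho>. exp (- \<tau> * \<rho>) * (\<tau> * \<eta>^3/12 + (-\<eta>/2) * (\<rho> - T) + (-(\<tau> * \<eta>/4) - 1/2) * (\<rho> - T)^2
      + (-\<tau>/6) * (\<rho> - T)^3)) has_integral
        (exp (- \<tau> * (T - \<eta>)) * P1 (T - \<eta> - T) - exp (- \<tau> * T) * P1 (T - T))) {T-\<eta>..T}"
    unfolding P1_def by (rule has_integral_exp_cubic) (use \<tau> \<eta> in auto)
  then have "(g has_integral (exp (- \<tau> * (T - \<eta>)) * P1 (T - \<eta> - T) - exp (- \<tau> * T) * P1 (T - T)))
      {T-\<eta>..T}"
    by (rule has_integral_eq[rotated]) (use g_left in auto)
  moreover have "((\<lambda>\<rho>. exp (- \<tau> * \<rho>) * (\<tau> * \<eta>^3/12 + (-\<eta>/2) * (\<rho> - T) + (1/2 - \<tau> * \<eta>/4) * (\<rho> - T)^2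
      + (\<tau>/6) * (\<rho> - T)^3)) has_integral
        (exp (- \<tau> * T) * P2 (T - T) - exp (- \<tau> * (T + \<eta>)) * P2 (T + \<eta> - T))) {T..T+\<eta>}"
    unfolding P2_def by (rule has_integral_exp_cubic) (use \<tau> \<eta> in auto)
  then have "(g has_integral (exp (- \<tau> * T) * P2 (T - T) - exp (- \<tau> * (T + \<eta>)) * P2 (T + \<eta> - T)))
      {T..T+\<eta>}"
    by (rule has_integral_eq[rotated]) (use g_right in auto)
  ultimately have I: "integral {T-\<eta>..T+\<eta>} g = exp (- \<tau> * (T - \<eta>)) * P1 (-\<eta>) - exp (- \<tau> * T) * P1 0
      + (exp (- \<tau> * T) * P2 0 - exp (- \<tau> * (T + \<eta>)) * P2 \<eta>)"
    using \<eta> by (intro integral_unique has_integral_combine[of "T - \<eta>" T "T + \<eta>"]) simp_all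
  have e1: "exp (\<tau> * (T - \<eta>)) * exp (- \<tau> * T) = exp (- \<tau> * \<eta>)"
    and e2: "exp (\<tau> * (T - \<eta>)) * exp (- \<tau> * (T - \<eta>)) = 1"
    and e3: "exp (\<tau> * (T - \<eta>)) * exp (- \<tau> * (T + \<eta>)) = exp (- \<tau> * (2 * \<eta>))"
    by (simp_all add: algebra_simps flip: exp_add)
  have "exp (\<tau> * (T - \<eta>)) * integral {T-\<eta>..T+\<eta>} g =
      (exp (\<tau> * (T - \<eta>)) * exp (- \<tau> * (T - \<eta>))) * P1 (-\<eta>) - (exp (\<tau> * (T - \<eta>)) * exp (- \<tau> * T)) * P1 0
      + (exp (\<tau> * (T - \<eta>)) * exp (- \<tau> * T)) * P2 0 - (exp (\<tau> * (T - \<eta>)) * exp (- \<tau> * (T + \<eta>))) * P2 \<eta>"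
    unfolding I by (simp add: algebra_simps)
  also have "\<dots> = P1 (-\<eta>) - exp (- \<tau> * \<eta>) * P1 0 + exp (- \<tau> * \<eta>) * P2 0 - exp (- \<tau> * (2 * \<eta>)) * P2 \<eta>"
    unfolding e1 e2 e3 by simp
  also have "\<dots> = 4 * exp (- \<tau> * \<eta>) / \<tau>^3 + \<eta> / \<tau>^2 - 2 / \<tau>^3 - exp (- \<tau> * (2 * \<eta>)) * (\<eta> / \<tau>^2 + 2 / \<tau>^3)"
    unfolding P1_def P2_def cubic_exp_primitive_def using \<tau>
    by (simp add: field_simps power2_eq_square power3_eq_cube power4_eq_xxxx)
  finally show ?thesis unfolding g_def .
qed

lemma bigo_integral_v_radial_combination:
  assumes \<eta>: "0 < \<eta>" "\<eta> < T"
  shows "(\<lambda>\<tau>. \<tau>^2 * exp (\<tau> * (T - \<eta>)) *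
      integral {T-\<eta>..T+\<eta>} (\<lambda>\<rho>. \<rho> * (\<tau> * v_radial \<eta> \<rho> T - v_radial_dt \<eta> \<rho> T) * exp (- \<tau> * \<rho>)) - \<eta>)
    \<in> O[at_top](\<lambda>\<tau>. 1 / \<tau>)"
proof (rule landau_o.big.in_cong[THEN iffD1])
  show "(\<lambda>\<tau>. 4 * exp (- \<tau> * \<eta>) / \<tau> - 2 / \<tau> - exp (- \<tau> * (2 * \<eta>)) * (\<eta> + 2 / \<tau>))
      \<in> O[at_top](\<lambda>\<tau>. 1 / \<tau>)"
    using \<eta> by real_asymp
  show "\<forall>\<^sub>F \<tau> in at_top. 4 * exp (- \<tau> * \<eta>) / \<tau> - 2 / \<tau> - exp (- \<tau> * (2 * \<eta>)) * (\<eta> + 2 / \<tau>) =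
      \<tau>^2 * exp (\<tau> * (T - \<eta>)) *
        integral {T-\<eta>..T+\<eta>} (\<lambda>\<rho>. \<rho> * (\<tau> * v_radial \<eta> \<rho> T - v_radial_dt \<eta> \<rho> T) * exp (- \<tau> * \<rho>)) - \<eta>"
    using eventually_gt_at_top[of 0]
  proof eventually_elim
    case (elim \<tau>)
    have "4 * exp (- \<tau> * \<eta>) / \<tau> - 2 / \<tau> - exp (- \<tau> * (2 * \<eta>)) * (\<eta> + 2 / \<tau>) =
        \<tau>^2 * (4 * exp (- \<tau> * \<eta>) / \<tau>^3 + \<eta> / \<tau>^2 - 2 / \<tau>^3
          - exp (- \<tau> * (2 * \<eta>)) * (\<eta> / \<tau>^2 + 2 / \<tau>^3)) - \<eta>"
      using elim by (simp add: field_simps power2_eq_square power3_eq_cube)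
    then show ?case
      unfolding integral_v_radial_combination[OF elim \<eta>, symmetric] by (simp add: mult.assoc)
  qed
qed

lemma integral_shell_wave_v:
  assumes \<eta>: "0 < \<eta>" "\<eta> < T" and \<tau>: "0 < \<tau>" and x: "x \<in> ball p (T - \<eta>) - {p}"
  shows "integral (ball p (T + \<eta>) - ball p (T - \<eta>))
      (\<lambda>y. exp (- \<tau> * dist x y) / dist x y * (\<tau> * wave_v p \<eta> y T - deriv (\<lambda>t. wave_v p \<eta> y t) T)) =
    4 * pi * sinh (\<tau> * dist x p) / (\<tau> * dist x p) *
      integral {T-\<eta>..T+\<eta>} (\<lambda>\<rho>. \<rho> * (\<tau> * v_radial \<eta> \<rho> T - v_radial_dt \<eta> \<rho> T) * exp (- \<tau> * \<rho>))"
proof -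
  define F where "F \<rho> = \<tau> * v_radial \<eta> \<rho> T - v_radial_dt \<eta> \<rho> T" for \<rho>
  text \<open>The formula for \<open>\<partial>\<^sub>t v\<close> is only established off the null set \<open>\<bar>y - p\<bar> = T\<close>.\<close>
  have "integral (ball p (T + \<eta>) - ball p (T - \<eta>))
      (\<lambda>y. exp (- \<tau> * dist x y) / dist x y * (\<tau> * wave_v p \<eta> y T - deriv (\<lambda>t. wave_v p \<eta> y t) T)) =
    integral (ball p (T + \<eta>) - ball p (T - \<eta>)) (\<lambda>y. exp (- \<tau> * dist x y) / dist x y * F (dist y p))"
  proof (rule integral_spike[OF negligible_sphere[of p T]])
    fix y assume "y \<in> (ball p (T + \<eta>) - ball p (T - \<eta>)) - sphere p T"
    then have "y \<noteq> p" "dist y p \<noteq> T" using \<eta> by (auto simp: dist_commute)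
    then show "exp (- \<tau> * dist x y) / dist x y * F (dist y p) =
        exp (- \<tau> * dist x y) / dist x y * (\<tau> * wave_v p \<eta> y T - deriv (\<lambda>t. wave_v p \<eta> y t) T)"
      using \<eta> by (simp add: F_def wave_v_eq_v_radial deriv_wave_v)
  qed
  also have "\<dots> = 4 * pi * sinh (\<tau> * dist x p) / (\<tau> * dist x p) *
      integral {T-\<eta>..T+\<eta>} (\<lambda>\<rho>. \<rho> * F \<rho> * exp (- \<tau> * \<rho>))"
    using \<eta> x unfolding F_def
    by (intro integral_shell_yukawa[OF \<tau>] continuous_on_v_radial_combination) (auto simp: dist_commute)
  finally show ?thesis unfolding F_def .
qed

theorem lemma2p2:
  fixes p :: "real^3" and \<eta> T :: real
  assumes "\<eta> > 0" and "T > \<eta>"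
  shows "\<exists>H :: real \<Rightarrow> real.
     (\<forall>\<tau>>0. \<forall>x \<in> ball p (T - \<eta>) - {p}.
        \<tau>\<^sup>2 / (4 * pi) *
          integral (ball p (T + \<eta>) - ball p (T - \<eta>))
            (\<lambda>y. exp (- \<tau> * dist x y) / dist x y *
                  (\<tau> * wave_v p \<eta> y T - deriv (\<lambda>t. wave_v p \<eta> y t) T))
        = exp (- \<tau> * (T - \<eta>)) * H \<tau> * (sinh (\<tau> * dist x p) / dist x p))
   \<and> (\<lambda>\<tau>. \<tau> * H \<tau> - \<eta>) \<in> O[at_top](\<lambda>\<tau>. 1 / \<tau>)"
proof -
  define H where "H \<tau> = \<tau> * exp (\<tau> * (T - \<eta>)) *
    integral {T-\<eta>..T+\<eta>} (\<lambda>\<rho>. \<rho> * (\<tau> * v_radial \<eta> \<rho> T - v_radial_dt \<eta> \<rho> T) * exp (- \<tau> * \<rho>))" for \<tau>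
  have "\<tau>\<^sup>2 / (4 * pi) * integral (ball p (T + \<eta>) - ball p (T - \<eta>))
      (\<lambda>y. exp (- \<tau> * dist x y) / dist x y * (\<tau> * wave_v p \<eta> y T - deriv (\<lambda>t. wave_v p \<eta> y t) T))
    = exp (- \<tau> * (T - \<eta>)) * H \<tau> * (sinh (\<tau> * dist x p) / dist x p)"
    if \<tau>: "0 < \<tau>" and x: "x \<in> ball p (T - \<eta>) - {p}" for \<tau> x
  proof -
    have "exp (- \<tau> * (T - \<eta>)) * exp (\<tau> * (T - \<eta>)) = 1" by (simp flip: exp_add)
    then show ?thesis
      unfolding integral_shell_wave_v[OF assms \<tau> x] H_def using \<tau> x
      by (simp add: field_simps power2_eq_square)
  qed
  moreover have "(\<lambda>\<tau>. \<tau> * H \<tau> - \<eta>) \<in> O[at_top](\<lambda>\<tau>. 1 / \<tau>)"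
    using bigo_integral_v_radial_combination[OF assms] by (simp add: H_def power2_eq_square mult.assoc)
  ultimately show ?thesis by blast
qed

end
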